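(* Let $M$ be an OHFM in $\mathcal{C}$ and let $V=\mathbb{R}\otimes_\mathbb{Z}\mathrm{gp}(M)$. Let $\mathcal{N}$ be the set of faces $F$ of $\mathsf{cone}_V(M)$ such that the face submonoid $M\cap F$ is not a UFM. Then either $\mathcal{N}=\emptyset$, or there is a face $F_0$ of $\mathsf{cone}_V(M)$ such that $\mathcal{N}=\{F : F \text{ a face of } \mathsf{cone}_V(M),\ F_0\subseteq F\}$, i.e., $\mathcal{N}$ is the interval $[F_0,\mathsf{cone}_V(M)]$ of the face lattice.
   Context: Convention: all monoids are commutative, cancellative, and reduced, written additively; atoms $\mathcal{A}(M)=M^\bullet\setminus(M^\bullet+M^\bullet)$ with $M^\bullet=M\setminus\{0\}$. $\mathcal{C}$ is the class of monoids isomorphic to a submonoid of a free commutative monoid of finite rank (equivalently, of $(\mathbb{N}^d,+)$). $M$ is regarded as a submonoid of $V$; $\mathsf{cone}_V(M)$ is the set of finite nonnegative linear combinations of elements of $M$. A face of a cone $C$ is a cone $F\subseteq C$ such that whenever $x,y\in C$ and $F$ meets the open segment between $x$ and $y$, then $x,y\in F$; the face lattice is the set of faces ordered by inclusion; a face submonoid is $M\cap F$ for a face $F$. A factorization of $x$ is a multiset of atoms summing to $x$, its length the number of atoms with multiplicity. UFM: every element has exactly one factorization. OHFM: every element has a factorization and for each nonzero $x$, two factorizations of $x$ of equal length coincide. *)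

theory Defs
  imports "HOL-Analysis.Analysis" "HOL-Library.Multiset"
begin

definition submonoid :: "'a::comm_monoid_add set \<Rightarrow> bool" where
  "submonoid M \<longleftrightarrow> 0 \<in> M \<and> (\<forall>x\<in>M. \<forall>y\<in>M. x + y \<in> M)"

definition atoms :: "'a::comm_monoid_add set \<Rightarrow> 'a set" where
  "atoms M = {a \<in> M - {0}. \<not> (\<exists>x\<in>M - {0}. \<exists>y\<in>M - {0}. a = x + y)}"

definition is_factorization :: "'a::comm_monoid_add set \<Rightarrow> 'a \<Rightarrow> 'a multiset \<Rightarrow> bool" where
  "is_factorization M x f \<longleftrightarrow> set_mset f \<subseteq> atoms M \<and> sum_mset f = x"

definition UFM :: "'a::comm_monoid_add set \<Rightarrow> bool" where
  "UFM M \<longleftrightarrow> (\<forall>x\<in>M. \<exists>!f. is_factorization M x f)"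

definition OHFM :: "'a::comm_monoid_add set \<Rightarrow> bool" where
  "OHFM M \<longleftrightarrow> (\<forall>x\<in>M. \<exists>f. is_factorization M x f) \<and>
     (\<forall>x\<in>M - {0}. \<forall>f g. is_factorization M x f \<and> is_factorization M x g \<and> size f = size g
        \<longrightarrow> f = g)"

definition cone_of :: "'a::real_vector set \<Rightarrow> 'a set" where
  "cone_of M = {y. \<exists>S c. finite S \<and> S \<subseteq> M \<and> (\<forall>x\<in>S. c x \<ge> (0::real)) \<and>
                        y = (\<Sum>x\<in>S. c x *\<^sub>R x)}"

definition cone_face :: "'a::real_vector set \<Rightarrow> 'a set \<Rightarrow> bool" where
  "cone_face F C \<longleftrightarrow> convex_cone F \<and> F \<subseteq> C \<and>
     (\<forall>x\<in>C. \<forall>y\<in>C. (\<exists>z\<in>F. z \<in> open_segment x y) \<longrightarrow> x \<in> F \<and> y \<in> F)"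

end

theory Submission imports Defs begin

text \<open>
  Call two distinct factorizations p, q of the same element a relation, and call the atoms
  occurring in them with different multiplicities its disagreement set. Since M is reduced and
  half-factorial, size p \<noteq> size q; orient every relation so that size p < size q. For two
  relations p, q and p', q', with d = size q - size p and d' = size q' - size p', the multisets
  d' p + d q' and d' q + d p' are factorizations of equal length of one nonzero element, hence
  equal, and comparing multiplicities shows that all relations have the same disagreement set D.
  The atoms of a face submonoid M \<inter> F are the atoms of M lying in F, so M \<inter> F fails to be a
  UFM exactly when some relation of M lives in F, i.e. (after cancelling common atoms) exactly
  when D \<subseteq> F. The faces containing D form the interval above their intersection, which is
  again a face.
\<close>

lemma convex_cone_cone_of: "convex_cone (cone_of M)"
  unfolding convex_cone_iff
proof (intro conjI ballI allI impI)
  show "0 \<in> cone_of M"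
    unfolding cone_of_def by (intro CollectI exI[of _ "{}"]) auto
next
  fix y c assume "y \<in> cone_of M" "(0::real) \<le> c"
  then obtain S d where S: "finite S" "S \<subseteq> M" "\<forall>x\<in>S. d x \<ge> 0" "y = (\<Sum>x\<in>S. d x *\<^sub>R x)"
    unfolding cone_of_def by blast
  have "c *\<^sub>R y = (\<Sum>x\<in>S. (c * d x) *\<^sub>R x)"
    using S(4) by (simp add: scaleR_sum_right)
  then show "c *\<^sub>R y \<in> cone_of M"
    using S \<open>0 \<le> c\<close> unfolding cone_of_def
    by (intro CollectI exI[of _ S] exI[of _ "\<lambda>x. c * d x"]) auto
next
  fix y w assume "y \<in> cone_of M" "w \<in> cone_of M"
  then obtain S d T e where
    S: "finite S" "S \<subseteq> M" "\<forall>x\<in>S. d x \<ge> 0" "y = (\<Sum>x\<in>S. d x *\<^sub>R x)" and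
    T: "finite T" "T \<subseteq> M" "\<forall>x\<in>T. e x \<ge> 0" "w = (\<Sum>x\<in>T. e x *\<^sub>R x)"
    unfolding cone_of_def by blast
  define d' where "d' x = (if x \<in> S then d x else 0)" for x
  define e' where "e' x = (if x \<in> T then e x else 0)" for x
  have "y = (\<Sum>x\<in>S \<union> T. d' x *\<^sub>R x)"
    unfolding S(4) d'_def by (rule sum.mono_neutral_cong_left) (use S T in auto)
  moreover have "w = (\<Sum>x\<in>S \<union> T. e' x *\<^sub>R x)"
    unfolding T(4) e'_def by (rule sum.mono_neutral_cong_left) (use S T in auto)
  ultimately have "y + w = (\<Sum>x\<in>S \<union> T. (d' x + e' x) *\<^sub>R x)"
    by (simp add: sum.distrib scaleR_add_left)
  then show "y + w \<in> cone_of M"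
    using S T unfolding cone_of_def
    by (intro CollectI exI[of _ "S \<union> T"] exI[of _ "\<lambda>x. d' x + e' x"]) (auto simp: d'_def e'_def)
qed

lemma subset_cone_of: "M \<subseteq> cone_of M"
proof
  fix x assume "x \<in> M"
  then show "x \<in> cone_of M"
    unfolding cone_of_def by (intro CollectI exI[of _ "{x}"] exI[of _ "\<lambda>_. 1::real"]) auto
qed

lemma cone_face_refl: "convex_cone C \<Longrightarrow> cone_face C C"
  unfolding cone_face_def by auto

lemma cone_face_add_memD:
  assumes "cone_face F C" "a \<in> C" "b \<in> C" "a + b \<in> F"
  shows "a \<in> F \<and> b \<in> F"
proof -
  have "convex_cone F" using assms(1) unfolding cone_face_def by auto
  then have mid: "midpoint a b \<in> F"
    using convex_cone_scaleR[of F "inverse 2" "a + b"] assms(4) by (simp add: midpoint_def)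
  show ?thesis
  proof (cases "a = b")
    case True
    then show ?thesis using mid by simp
  next
    case False
    then have "midpoint a b \<in> open_segment a b" by simp
    then show ?thesis using assms(1-3) mid unfolding cone_face_def by blast
  qed
qed

lemma cone_face_Inter:
  assumes "\<F> \<noteq> {}" "\<And>F. F \<in> \<F> \<Longrightarrow> cone_face F C"
  shows "cone_face (\<Inter>\<F>) C"
  unfolding cone_face_def
proof (intro conjI ballI impI)
  show "convex_cone (\<Inter>\<F>)"
    using assms(2) by (intro convex_cone_Inter) (auto simp: cone_face_def)
  show "\<Inter>\<F> \<subseteq> C"
    using assms unfolding cone_face_def by blast
next
  fix x y assume "x \<in> C" "y \<in> C" "\<exists>z\<in>\<Inter>\<F>. z \<in> open_segment x y"
  then have "x \<in> F \<and> y \<in> F" if "F \<in> \<F>" for F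
    using that assms(2)[OF that] unfolding cone_face_def by blast
  then show "x \<in> \<Inter>\<F>" "y \<in> \<Inter>\<F>" by auto
qed

lemma exists_least_cone_face:
  assumes "convex_cone C" "D \<subseteq> C"
  obtains F0 where "cone_face F0 C" "\<And>F. cone_face F C \<Longrightarrow> D \<subseteq> F \<longleftrightarrow> F0 \<subseteq> F"
proof
  define \<F> where "\<F> = {F. cone_face F C \<and> D \<subseteq> F}"
  have "C \<in> \<F>" using assms cone_face_refl unfolding \<F>_def by blast
  then show "cone_face (\<Inter>\<F>) C" by (intro cone_face_Inter) (auto simp: \<F>_def)
  show "D \<subseteq> F \<longleftrightarrow> \<Inter>\<F> \<subseteq> F" if "cone_face F C" for F
    using that unfolding \<F>_def by blast
qed

lemma submonoid_sum_mset: "submonoid M \<Longrightarrow> set_mset f \<subseteq> M \<Longrightarrow> sum_mset f \<in> M"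
  by (induction f) (auto simp: submonoid_def)

lemma submonoid_convex_cone: "convex_cone F \<Longrightarrow> submonoid F"
  unfolding submonoid_def by (auto intro: convex_cone_add convex_cone_contains_0)

lemma submonoid_Int: "submonoid M \<Longrightarrow> submonoid N \<Longrightarrow> submonoid (M \<inter> N)"
  unfolding submonoid_def by auto

lemma cone_face_sum_mset_memD:
  assumes "convex_cone C" "cone_face F C"
  shows "set_mset f \<subseteq> C \<Longrightarrow> sum_mset f \<in> F \<Longrightarrow> set_mset f \<subseteq> F"
proof (induction f)
  case (add a g)
  have "sum_mset g \<in> C"
    using add.prems submonoid_sum_mset[OF submonoid_convex_cone[OF assms(1)]] by auto
  then have "a \<in> F \<and> sum_mset g \<in> F"
    using cone_face_add_memD[OF assms(2)] add.prems by auto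
  then show ?case using add by auto
qed simp

lemma atoms_subset: "atoms M \<subseteq> M"
  unfolding atoms_def by auto

lemma atoms_Int_cone_face:
  assumes "cone_face F C" "M \<subseteq> C"
  shows "atoms (M \<inter> F) = atoms M \<inter> F"
proof
  show "atoms (M \<inter> F) \<subseteq> atoms M \<inter> F"
  proof
    fix a assume a: "a \<in> atoms (M \<inter> F)"
    have "x \<in> F \<and> y \<in> F" if "x \<in> M" "y \<in> M" "a = x + y" for x y
      using cone_face_add_memD[OF assms(1), of x y] a that assms(2) unfolding atoms_def by auto
    then show "a \<in> atoms M \<inter> F"
      using a unfolding atoms_def by blast
  qed
qed (auto simp: atoms_def)

definition atomic :: "'a::comm_monoid_add set \<Rightarrow> bool" where
  "atomic M \<longleftrightarrow> (\<forall>x\<in>M. \<exists>f. is_factorization M x f)"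

lemma OHFM_imp_atomic: "OHFM M \<Longrightarrow> atomic M"
  unfolding OHFM_def atomic_def by blast

definition atom_relation :: "'a::comm_monoid_add set \<Rightarrow> 'a multiset \<Rightarrow> 'a multiset \<Rightarrow> bool" where
  "atom_relation M p q \<longleftrightarrow>
     set_mset p \<subseteq> atoms M \<and> set_mset q \<subseteq> atoms M \<and> sum_mset p = sum_mset q \<and> p \<noteq> q"

definition disagreement_set :: "'a multiset \<Rightarrow> 'a multiset \<Rightarrow> 'a set" where
  "disagreement_set p q = {a. count p a \<noteq> count q a}"

lemma atom_relation_sym: "atom_relation M p q \<Longrightarrow> atom_relation M q p"
  unfolding atom_relation_def by auto

lemma disagreement_set_sym: "disagreement_set p q = disagreement_set q p"
  unfolding disagreement_set_def by auto

lemma disagreement_set_subset: "disagreement_set p q \<subseteq> set_mset p \<union> set_mset q"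
  unfolding disagreement_set_def by (auto simp flip: count_greater_zero_iff)

lemma UFM_iff_no_atom_relation:
  assumes "submonoid M" "atomic M"
  shows "UFM M \<longleftrightarrow> \<not> (\<exists>p q. atom_relation M p q)"
proof
  assume "UFM M"
  then show "\<not> (\<exists>p q. atom_relation M p q)"
    using submonoid_sum_mset[OF assms(1)] atoms_subset
    unfolding UFM_def atom_relation_def is_factorization_def by (metis subset_trans)
next
  assume "\<not> (\<exists>p q. atom_relation M p q)"
  then show "UFM M"
    using assms(2) unfolding UFM_def atomic_def atom_relation_def is_factorization_def by metis
qed

lemma atomic_Int_cone_face:
  assumes "convex_cone C" "cone_face F C" "M \<subseteq> C" "submonoid M" "atomic M"
  shows "atomic (M \<inter> F)"
  unfolding atomic_def
proof
  fix x assume x: "x \<in> M \<inter> F"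
  then obtain f where f: "set_mset f \<subseteq> atoms M" "sum_mset f = x"
    using assms(5) unfolding atomic_def is_factorization_def by blast
  then have "set_mset f \<subseteq> F"
    using cone_face_sum_mset_memD[OF assms(1,2)] x atoms_subset assms(3) by blast
  then show "\<exists>f. is_factorization (M \<inter> F) x f"
    using f atoms_Int_cone_face[OF assms(2,3)] unfolding is_factorization_def by auto
qed

lemma atom_relation_Int_cone_face_iff:
  assumes "cone_face F C" "M \<subseteq> C"
  shows "atom_relation (M \<inter> F) p q \<longleftrightarrow> atom_relation M p q \<and> set_mset p \<subseteq> F \<and> set_mset q \<subseteq> F"
  using atoms_Int_cone_face[OF assms] unfolding atom_relation_def by auto

lemma atom_relation_cancel:
  fixes p q :: "'a::cancel_comm_monoid_add multiset"
  assumes "atom_relation M p q"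
  shows "atom_relation M (p - q) (q - p)"
    and "set_mset (p - q) \<union> set_mset (q - p) \<subseteq> disagreement_set p q"
proof -
  have p: "p = (p - q) + (p \<inter># q)" and q: "q = (q - p) + (p \<inter># q)"
    by (auto intro: multiset_eqI)
  then have "sum_mset (p - q) = sum_mset (q - p)" "p - q \<noteq> q - p"
    using assms unfolding atom_relation_def by (metis add_right_cancel sum_mset.union, metis)
  then show "atom_relation M (p - q) (q - p)"
    using assms unfolding atom_relation_def by (auto dest: in_diffD)
  show "set_mset (p - q) \<union> set_mset (q - p) \<subseteq> disagreement_set p q"
    unfolding disagreement_set_def by (auto simp: in_diff_count)
qed

definition reduced :: "'a::comm_monoid_add set \<Rightarrow> bool" where
  "reduced M \<longleftrightarrow> (\<forall>x\<in>M. \<forall>y\<in>M. x + y = 0 \<longrightarrow> x = 0)"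

lemma reduced_nonneg_coordinates:
  fixes M :: "(real ^ 'd) set"
  assumes "\<forall>x\<in>M. \<forall>i. 0 \<le> x $ i"
  shows "reduced M"
  unfolding reduced_def vec_eq_iff using assms by (simp add: add_nonneg_eq_0_iff)

lemma sum_mset_atoms_neq_zero:
  assumes "submonoid M" "reduced M" "set_mset f \<subseteq> atoms M" "f \<noteq> {#}"
  shows "sum_mset f \<noteq> 0"
proof
  assume sum0: "sum_mset f = 0"
  obtain a g where f: "f = add_mset a g" using assms(4) by (metis multiset_cases)
  then have "a \<in> M" "a \<noteq> 0" "sum_mset g \<in> M"
    using assms(3) submonoid_sum_mset[OF assms(1)] unfolding atoms_def by auto
  then show False using sum0 f assms(2) unfolding reduced_def by auto
qed

lemma atom_relation_size_neq:
  assumes "submonoid M" "reduced M" "OHFM M" "atom_relation M p q"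
  shows "size p \<noteq> size q"
proof
  assume size: "size p = size q"
  have "p \<noteq> {#}"
    using size assms(4) unfolding atom_relation_def by auto
  then have "sum_mset p \<in> M - {0}"
    using sum_mset_atoms_neq_zero[OF assms(1,2)] submonoid_sum_mset[OF assms(1)] atoms_subset assms(4)
    unfolding atom_relation_def by blast
  then show False
    using assms(3,4) size unfolding OHFM_def atom_relation_def is_factorization_def by auto
qed

lemma set_mset_repeat_mset_subset: "set_mset (repeat_mset n A) \<subseteq> set_mset A"
  by (auto simp flip: count_greater_zero_iff)

lemma sum_mset_repeat_mset_cong:
  "sum_mset A = sum_mset B \<Longrightarrow> sum_mset (repeat_mset n A) = sum_mset (repeat_mset n B)"
  by (induction n) auto

lemma disagreement_set_eq_if_size_less:
  assumes "submonoid M" "reduced M" "OHFM M"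
    and pq: "atom_relation M p q" "size p < size q"
    and pq': "atom_relation M p' q'" "size p' < size q'"
  shows "disagreement_set p q = disagreement_set p' q'"
proof -
  define d where "d = size q - size p"
  define d' where "d' = size q' - size p'"
  define A where "A = repeat_mset d' p + repeat_mset d q'"
  define B where "B = repeat_mset d' q + repeat_mset d p'"
  have d: "d > 0" "d' > 0" "size q = size p + d" "size q' = size p' + d'"
    using pq(2) pq'(2) unfolding d_def d'_def by auto
  have atoms: "set_mset A \<subseteq> atoms M" "set_mset B \<subseteq> atoms M"
    using pq(1) pq'(1) set_mset_repeat_mset_subset[of d' p] set_mset_repeat_mset_subset[of d q']
      set_mset_repeat_mset_subset[of d' q] set_mset_repeat_mset_subset[of d p']
    unfolding A_def B_def atom_relation_def by auto
  moreover have "sum_mset A = sum_mset B"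
    using pq(1) pq'(1) sum_mset_repeat_mset_cong[of p q d'] sum_mset_repeat_mset_cong[of p' q' d]
    unfolding A_def B_def atom_relation_def by (simp add: add.commute)
  moreover have "size A = size B"
    unfolding A_def B_def by (simp add: d algebra_simps)
  moreover have "A \<noteq> {#}"
    using pq'(2) d unfolding A_def by (auto simp: repeat_mset_eq_empty_iff)
  then have "sum_mset A \<in> M - {0}"
    using sum_mset_atoms_neq_zero[OF assms(1,2) atoms(1)] submonoid_sum_mset[OF assms(1)]
      atoms_subset atoms(1) by blast
  ultimately have "A = B"
    using assms(3) unfolding OHFM_def is_factorization_def by simp
  then have "count A a = count B a" for a
    by simp
  then have "d' * count p a + d * count q' a = d' * count q a + d * count p' a" for a
    unfolding A_def B_def by simp
  then have "count p a = count q a \<longleftrightarrow> count p' a = count q' a" for a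
    using d(1,2) by (metis add_left_cancel add_right_cancel mult_cancel_left neq0_conv)
  then show ?thesis
    unfolding disagreement_set_def by blast
qed

lemma disagreement_set_unique:
  assumes "submonoid M" "reduced M" "OHFM M" "atom_relation M p q" "atom_relation M p' q'"
  shows "disagreement_set p q = disagreement_set p' q'"
proof -
  have oriented: "\<exists>u v. atom_relation M u v \<and> size u < size v \<and> disagreement_set u v = disagreement_set p q"
    if "atom_relation M p q" for p q
    using that atom_relation_size_neq[OF assms(1-3) that] atom_relation_sym disagreement_set_sym
    by (metis linorder_neqE_nat)
  show ?thesis
    using oriented[OF assms(4)] oriented[OF assms(5)] disagreement_set_eq_if_size_less[OF assms(1-3)]
    by metis
qed

lemma UFM_Int_cone_face_iff:
  assumes "convex_cone C" "cone_face F C" "M \<subseteq> C" "submonoid M" "atomic M"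
  shows "UFM (M \<inter> F) \<longleftrightarrow> \<not> (\<exists>p q. atom_relation M p q \<and> set_mset p \<subseteq> F \<and> set_mset q \<subseteq> F)"
proof -
  have "submonoid (M \<inter> F)"
    using assms(2) by (intro submonoid_Int[OF assms(4)] submonoid_convex_cone) (simp add: cone_face_def)
  then show ?thesis
    using UFM_iff_no_atom_relation atomic_Int_cone_face[OF assms] atom_relation_Int_cone_face_iff[OF assms(2,3)]
    by metis
qed

lemma UFM_Int_cone_face_iff_disagreement_set:
  assumes "submonoid M" "reduced M" "OHFM M" "atom_relation M p q"
    and "convex_cone C" "cone_face F C" "M \<subseteq> C"
  shows "UFM (M \<inter> F) \<longleftrightarrow> \<not> disagreement_set p q \<subseteq> F"
proof -
  have "disagreement_set p q \<subseteq> F \<longleftrightarrow>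
      (\<exists>p' q'. atom_relation M p' q' \<and> set_mset p' \<subseteq> F \<and> set_mset q' \<subseteq> F)"
  proof
    assume "disagreement_set p q \<subseteq> F"
    with atom_relation_cancel[OF assms(4)]
    show "\<exists>p' q'. atom_relation M p' q' \<and> set_mset p' \<subseteq> F \<and> set_mset q' \<subseteq> F"
      by (intro exI[of _ "p - q"] exI[of _ "q - p"]) auto
  next
    assume "\<exists>p' q'. atom_relation M p' q' \<and> set_mset p' \<subseteq> F \<and> set_mset q' \<subseteq> F"
    then obtain p' q' where "atom_relation M p' q'" "set_mset p' \<subseteq> F" "set_mset q' \<subseteq> F"
      by blast
    then show "disagreement_set p q \<subseteq> F"
      using disagreement_set_unique[OF assms(1-4)] disagreement_set_subset[of p' q'] by auto
  qed
  then show ?thesis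
    using UFM_Int_cone_face_iff[OF assms(5-7,1) OHFM_imp_atomic[OF assms(3)]] by simp
qed

theorem mainTheorem12:
  fixes M :: "(real ^ 'd::finite) set"
  assumes "submonoid M"
    and "\<forall>x\<in>M. \<forall>i. x $ i \<in> \<nat>"
    and "OHFM M"
  defines "N \<equiv> {F. cone_face F (cone_of M) \<and> \<not> UFM (M \<inter> F)}"
  shows "N = {} \<or>
         (\<exists>F0. cone_face F0 (cone_of M) \<and> N = {F. cone_face F (cone_of M) \<and> F0 \<subseteq> F})"
proof (cases "\<exists>p q. atom_relation M p q")
  case False
  then have "N = {}"
    using UFM_Int_cone_face_iff[OF convex_cone_cone_of _ subset_cone_of assms(1) OHFM_imp_atomic[OF assms(3)]]
    unfolding N_def by blast
  then show ?thesis ..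
next
  case True
  then obtain p q where pq: "atom_relation M p q" by blast
  have "reduced M"
    using assms(2) by (intro reduced_nonneg_coordinates) (metis Nats_cases of_nat_0_le_iff)
  then have N: "N = {F. cone_face F (cone_of M) \<and> disagreement_set p q \<subseteq> F}"
    using UFM_Int_cone_face_iff_disagreement_set[OF assms(1) _ assms(3) pq convex_cone_cone_of _ subset_cone_of]
    unfolding N_def by blast
  have "disagreement_set p q \<subseteq> set_mset p \<union> set_mset q"
    by (rule disagreement_set_subset)
  also have "\<dots> \<subseteq> M"
    using pq atoms_subset unfolding atom_relation_def by blast
  also have "\<dots> \<subseteq> cone_of M"
    by (rule subset_cone_of)
  finally obtain F0 where F0: "cone_face F0 (cone_of M)"
    and least: "\<And>F. cone_face F (cone_of M) \<Longrightarrow> disagreement_set p q \<subseteq> F \<longleftrightarrow> F0 \<subseteq> F"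
    by (rule exists_least_cone_face[OF convex_cone_cone_of]) iprover
  have "N = {F. cone_face F (cone_of M) \<and> F0 \<subseteq> F}"
    unfolding N using least by auto
  then show ?thesis
    using F0 by (intro disjI2 exI[of _ F0] conjI)
qed

end
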